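(* Let $P:\mathcal C^{op}\to\mathbf{Pos}$ be a doctrine and $\mathsf K=(K,\kappa,\mu,\nu)$ a comonad on $P$ in $\mathbf{IdxPos}$. Let $\mathcal C_K$ be the category of coalgebras for the comonad $(K,\mu,\nu)$ on $\mathcal C$ and $U:\mathcal C_K\to\mathcal C$ the forgetful functor. Then the natural transformation $\square^{\mathsf K}:P\circ U^{op}\Rightarrow P\circ U^{op}$ defined, for each coalgebra $(X,c)$, by $\square^{\mathsf K}_{(X,c)}=P(c)\circ\kappa_X:PX\to PX$, is an interior operator on the doctrine $P\circ U^{op}:\mathcal C_K^{op}\to\mathbf{Pos}$.
   Context: A doctrine is a functor $P:\mathcal C^{op}\to\mathbf{Pos}$; for $t:X\to Y$, $P(t):PY\to PX$ is reindexing. A comonad on $P$ in the 2-category $\mathbf{IdxPos}$ of doctrines amounts to a quadruple $(K,\kappa,\mu,\nu)$ where $(K,\mu,\nu)$ is a comonad on $\mathcal C$, $\kappa:P\Rightarrow P\circ K^{op}$ is a natural transformation (components $\kappa_X:PX\to P(KX)$), and for all $X$, $\kappa_X\le P(\mu_X)\circ\kappa_{KX}\circ\kappa_X$ and $\kappa_X\le P(\nu_X)$ pointwise. A coalgebra is $(X,c)$ with $c:X\to KX$, $\nu_X c=\mathrm{id}_X$, $\mu_X c=Kc\circ c$; morphisms $t:(X,c)\to(X',c')$ satisfy $c't=Kt\circ c$. An interior operator on a doctrine $M:\mathcal B^{op}\to\mathbf{Pos}$ is a natural transformation $\square:M\Rightarrow M$ with $\square_B(\alpha)\le\alpha$ and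 $\square_B(\alpha)\le\square_B(\square_B\alpha)$ for all $B$ and $\alpha\in MB$. *)

theory Defs
  imports Main
begin

record ('o,'m) cat =
  Ob  :: "'o set"
  Ar  :: "'m set"
  Dom :: "'m \<Rightarrow> 'o"
  Cod :: "'m \<Rightarrow> 'o"
  Cmp :: "'m \<Rightarrow> 'm \<Rightarrow> 'm"   (* Cmp C g f = g \<circ> f *)
  Idm :: "'o \<Rightarrow> 'm"

definition category :: "('o,'m) cat \<Rightarrow> bool" where
  "category C \<longleftrightarrow>
     (\<forall>f\<in>Ar C. Dom C f \<in> Ob C \<and> Cod C f \<in> Ob C) \<and>
     (\<forall>X\<in>Ob C. Idm C X \<in> Ar C \<and> Dom C (Idm C X) = X \<and> Cod C (Idm C X) = X) \<and>
     (\<forall>f\<in>Ar C. \<forall>g\<in>Ar C. Cod C f = Dom C g \<longrightarrow>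
        Cmp C g f \<in> Ar C \<and> Dom C (Cmp C g f) = Dom C f \<and> Cod C (Cmp C g f) = Cod C g) \<and>
     (\<forall>f\<in>Ar C. Cmp C f (Idm C (Dom C f)) = f \<and> Cmp C (Idm C (Cod C f)) f = f) \<and>
     (\<forall>f\<in>Ar C. \<forall>g\<in>Ar C. \<forall>h\<in>Ar C. Cod C f = Dom C g \<longrightarrow> Cod C g = Dom C h \<longrightarrow>
        Cmp C h (Cmp C g f) = Cmp C (Cmp C h g) f)"

definition endofunctor :: "('o,'m) cat \<Rightarrow> ('o \<Rightarrow> 'o) \<Rightarrow> ('m \<Rightarrow> 'm) \<Rightarrow> bool" where
  "endofunctor C Fo Fa \<longleftrightarrow>
     (\<forall>X\<in>Ob C. Fo X \<in> Ob C \<and> Fa (Idm C X) = Idm C (Fo X)) \<and>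
     (\<forall>f\<in>Ar C. Fa f \<in> Ar C \<and> Dom C (Fa f) = Fo (Dom C f) \<and> Cod C (Fa f) = Fo (Cod C f)) \<and>
     (\<forall>f\<in>Ar C. \<forall>g\<in>Ar C. Cod C f = Dom C g \<longrightarrow> Fa (Cmp C g f) = Cmp C (Fa g) (Fa f))"

definition nat_trans :: "('o,'m) cat \<Rightarrow> ('o \<Rightarrow> 'o) \<Rightarrow> ('m \<Rightarrow> 'm) \<Rightarrow> ('o \<Rightarrow> 'o) \<Rightarrow> ('m \<Rightarrow> 'm)
    \<Rightarrow> ('o \<Rightarrow> 'm) \<Rightarrow> bool" where
  "nat_trans C Fo Fa Go Ga \<eta> \<longleftrightarrow>
     (\<forall>X\<in>Ob C. \<eta> X \<in> Ar C \<and> Dom C (\<eta> X) = Fo X \<and> Cod C (\<eta> X) = Go X) \<and>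
     (\<forall>f\<in>Ar C. Cmp C (\<eta> (Cod C f)) (Fa f) = Cmp C (Ga f) (\<eta> (Dom C f)))"

definition comonad :: "('o,'m) cat \<Rightarrow> ('o \<Rightarrow> 'o) \<Rightarrow> ('m \<Rightarrow> 'm) \<Rightarrow> ('o \<Rightarrow> 'm) \<Rightarrow> ('o \<Rightarrow> 'm) \<Rightarrow> bool" where
  "comonad C Ko Ka \<mu> \<nu> \<longleftrightarrow>
     category C \<and> endofunctor C Ko Ka \<and>
     nat_trans C Ko Ka (Ko \<circ> Ko) (Ka \<circ> Ka) \<mu> \<and>
     nat_trans C Ko Ka id id \<nu> \<and>
     (\<forall>X\<in>Ob C. Cmp C (\<nu> (Ko X)) (\<mu> X) = Idm C (Ko X) \<and>
                Cmp C (Ka (\<nu> X)) (\<mu> X) = Idm C (Ko X) \<and>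
                Cmp C (\<mu> (Ko X)) (\<mu> X) = Cmp C (Ka (\<mu> X)) (\<mu> X))"

definition doctrine :: "('o,'m) cat \<Rightarrow> ('o \<Rightarrow> 'p set) \<Rightarrow> ('o \<Rightarrow> 'p \<Rightarrow> 'p \<Rightarrow> bool)
    \<Rightarrow> ('m \<Rightarrow> 'p \<Rightarrow> 'p) \<Rightarrow> bool" where
  "doctrine C PC le rx \<longleftrightarrow>
     (\<forall>X\<in>Ob C. (\<forall>a\<in>PC X. le X a a) \<and>
                (\<forall>a\<in>PC X. \<forall>b\<in>PC X. le X a b \<longrightarrow> le X b a \<longrightarrow> a = b) \<and>
                (\<forall>a\<in>PC X. \<forall>b\<in>PC X. \<forall>c\<in>PC X. le X a b \<longrightarrow> le X b c \<longrightarrow> le X a c)) \<and>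
     (\<forall>t\<in>Ar C. (\<forall>a\<in>PC (Cod C t). rx t a \<in> PC (Dom C t)) \<and>
                (\<forall>a\<in>PC (Cod C t). \<forall>b\<in>PC (Cod C t). le (Cod C t) a b \<longrightarrow> le (Dom C t) (rx t a) (rx t b))) \<and>
     (\<forall>X\<in>Ob C. \<forall>a\<in>PC X. rx (Idm C X) a = a) \<and>
     (\<forall>f\<in>Ar C. \<forall>g\<in>Ar C. Cod C f = Dom C g \<longrightarrow>
        (\<forall>a\<in>PC (Cod C g). rx (Cmp C g f) a = rx f (rx g a)))"

definition doctrine_comonad :: "('o,'m) cat \<Rightarrow> ('o \<Rightarrow> 'p set) \<Rightarrow> ('o \<Rightarrow> 'p \<Rightarrow> 'p \<Rightarrow> bool)
    \<Rightarrow> ('m \<Rightarrow> 'p \<Rightarrow> 'p) \<Rightarrow> ('o \<Rightarrow> 'o) \<Rightarrow> ('m \<Rightarrow> 'm) \<Rightarrow> ('o \<Rightarrow> 'p \<Rightarrow> 'p)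
    \<Rightarrow> ('o \<Rightarrow> 'm) \<Rightarrow> ('o \<Rightarrow> 'm) \<Rightarrow> bool" where
  "doctrine_comonad C PC le rx Ko Ka \<kappa> \<mu> \<nu> \<longleftrightarrow>
     comonad C Ko Ka \<mu> \<nu> \<and>
     (\<forall>X\<in>Ob C. (\<forall>a\<in>PC X. \<kappa> X a \<in> PC (Ko X)) \<and>
                (\<forall>a\<in>PC X. \<forall>b\<in>PC X. le X a b \<longrightarrow> le (Ko X) (\<kappa> X a) (\<kappa> X b))) \<and>
     (\<forall>t\<in>Ar C. \<forall>a\<in>PC (Cod C t). \<kappa> (Dom C t) (rx t a) = rx (Ka t) (\<kappa> (Cod C t) a)) \<and>
     (\<forall>X\<in>Ob C. \<forall>a\<in>PC X.
        le (Ko X) (\<kappa> X a) (rx (\<mu> X) (\<kappa> (Ko X) (\<kappa> X a))) \<and>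
        le (Ko X) (\<kappa> X a) (rx (\<nu> X) a))"

definition coalgebra :: "('o,'m) cat \<Rightarrow> ('o \<Rightarrow> 'o) \<Rightarrow> ('m \<Rightarrow> 'm) \<Rightarrow> ('o \<Rightarrow> 'm) \<Rightarrow> ('o \<Rightarrow> 'm)
    \<Rightarrow> 'o \<times> 'm \<Rightarrow> bool" where
  "coalgebra C Ko Ka \<mu> \<nu> Xc \<longleftrightarrow>
     (case Xc of (X, c) \<Rightarrow> X \<in> Ob C \<and> c \<in> Ar C \<and> Dom C c = X \<and> Cod C c = Ko X \<and>
        Cmp C (\<nu> X) c = Idm C X \<and> Cmp C (\<mu> X) c = Cmp C (Ka c) c)"

definition coalg_cat :: "('o,'m) cat \<Rightarrow> ('o \<Rightarrow> 'o) \<Rightarrow> ('m \<Rightarrow> 'm) \<Rightarrow> ('o \<Rightarrow> 'm) \<Rightarrow> ('o \<Rightarrow> 'm)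
    \<Rightarrow> ('o \<times> 'm, ('o \<times> 'm) \<times> 'm \<times> ('o \<times> 'm)) cat" where
  "coalg_cat C Ko Ka \<mu> \<nu> =
     \<lparr> Ob = {Xc. coalgebra C Ko Ka \<mu> \<nu> Xc},
       Ar = {((X, c), t, (X', c')). coalgebra C Ko Ka \<mu> \<nu> (X, c) \<and> coalgebra C Ko Ka \<mu> \<nu> (X', c') \<and>
               t \<in> Ar C \<and> Dom C t = X \<and> Cod C t = X' \<and> Cmp C c' t = Cmp C (Ka t) c},
       Dom = fst,
       Cod = (\<lambda>a. snd (snd a)),
       Cmp = (\<lambda>g f. (fst f, Cmp C (fst (snd g)) (fst (snd f)), snd (snd g))),
       Idm = (\<lambda>Xc. (Xc, Idm C (fst Xc), Xc)) \<rparr>"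

definition U_ob :: "'o \<times> 'm \<Rightarrow> 'o" where "U_ob Xc = fst Xc"
definition U_ar :: "('o \<times> 'm) \<times> 'm \<times> ('o \<times> 'm) \<Rightarrow> 'm" where "U_ar a = fst (snd a)"

definition interior_operator :: "('b,'n) cat \<Rightarrow> ('b \<Rightarrow> 'p set) \<Rightarrow> ('b \<Rightarrow> 'p \<Rightarrow> 'p \<Rightarrow> bool)
    \<Rightarrow> ('n \<Rightarrow> 'p \<Rightarrow> 'p) \<Rightarrow> ('b \<Rightarrow> 'p \<Rightarrow> 'p) \<Rightarrow> bool" where
  "interior_operator B MC le rx box \<longleftrightarrow>
     (\<forall>X\<in>Ob B. (\<forall>a\<in>MC X. box X a \<in> MC X) \<and>
                (\<forall>a\<in>MC X. \<forall>b\<in>MC X. le X a b \<longrightarrow> le X (box X a) (box X b))) \<and>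
     (\<forall>t\<in>Ar B. \<forall>a\<in>MC (Cod B t). box (Dom B t) (rx t a) = rx t (box (Cod B t) a)) \<and>
     (\<forall>X\<in>Ob B. \<forall>a\<in>MC X. le X (box X a) a \<and> le X (box X a) (box X (box X a)))"

end

theory Submission
  imports Defs
begin

text \<open>For a coalgebra \<open>c : X \<rightarrow> K X\<close> put \<open>\<box> = P(c) \<circ> \<kappa>\<^sub>X\<close>. Deflation follows from
  \<open>\<kappa>\<^sub>X \<le> P(\<nu>\<^sub>X)\<close> and the counit law \<open>\<nu>\<^sub>X c = id\<close>. The inequality \<open>\<box> \<le> \<box>\<box>\<close> follows from
  \<open>\<kappa>\<^sub>X \<le> P(\<mu>\<^sub>X) \<kappa>\<^sub>K\<^sub>X \<kappa>\<^sub>X\<close>, the coassociativity law \<open>\<mu>\<^sub>X c = K c \<circ> c\<close> and naturality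
  \<open>P(K c) \<kappa>\<^sub>K\<^sub>X = \<kappa>\<^sub>X P(c)\<close>. Naturality of \<open>\<box>\<close> along a coalgebra morphism \<open>t\<close> is the same
  naturality of \<open>\<kappa>\<close> combined with \<open>c' t = K t \<circ> c\<close>.\<close>

lemma doctrine_reindex_closed:
  assumes "doctrine C PC le rx" "t \<in> Ar C" "a \<in> PC (Cod C t)"
  shows "rx t a \<in> PC (Dom C t)"
  using assms unfolding doctrine_def by blast

lemma doctrine_reindex_mono:
  assumes "doctrine C PC le rx" "t \<in> Ar C" "a \<in> PC (Cod C t)" "b \<in> PC (Cod C t)"
    "le (Cod C t) a b"
  shows "le (Dom C t) (rx t a) (rx t b)"
  using assms unfolding doctrine_def by blast

lemma doctrine_reindex_id:
  assumes "doctrine C PC le rx" "X \<in> Ob C" "a \<in> PC X"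
  shows "rx (Idm C X) a = a"
  using assms unfolding doctrine_def by blast

lemma doctrine_reindex_comp:
  assumes "doctrine C PC le rx" "f \<in> Ar C" "g \<in> Ar C" "Cod C f = Dom C g" "a \<in> PC (Cod C g)"
  shows "rx (Cmp C g f) a = rx f (rx g a)"
  using assms unfolding doctrine_def by blast

lemma comonad_obj_closed:
  assumes "comonad C Ko Ka \<mu> \<nu>" "X \<in> Ob C"
  shows "Ko X \<in> Ob C"
  using assms unfolding comonad_def endofunctor_def by blast

lemma comonad_map_arrow:
  assumes "comonad C Ko Ka \<mu> \<nu>" "f \<in> Ar C"
  shows "Ka f \<in> Ar C" "Dom C (Ka f) = Ko (Dom C f)" "Cod C (Ka f) = Ko (Cod C f)"
  using assms unfolding comonad_def endofunctor_def by blast+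

lemma comonad_comult_arrow:
  assumes "comonad C Ko Ka \<mu> \<nu>" "X \<in> Ob C"
  shows "\<mu> X \<in> Ar C" "Dom C (\<mu> X) = Ko X" "Cod C (\<mu> X) = Ko (Ko X)"
  using assms unfolding comonad_def nat_trans_def by auto

lemma comonad_counit_arrow:
  assumes "comonad C Ko Ka \<mu> \<nu>" "X \<in> Ob C"
  shows "\<nu> X \<in> Ar C" "Dom C (\<nu> X) = Ko X" "Cod C (\<nu> X) = X"
  using assms unfolding comonad_def nat_trans_def by auto

lemma coalgebraD:
  assumes "coalgebra C Ko Ka \<mu> \<nu> (X, c)"
  shows "X \<in> Ob C" "c \<in> Ar C" "Dom C c = X" "Cod C c = Ko X"
    and "Cmp C (\<nu> X) c = Idm C X" "Cmp C (\<mu> X) c = Cmp C (Ka c) c"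
  using assms unfolding coalgebra_def by auto

lemma coalg_cat_arrowD:
  assumes "((X, c), t, (X', c')) \<in> Ar (coalg_cat C Ko Ka \<mu> \<nu>)"
  shows "coalgebra C Ko Ka \<mu> \<nu> (X, c)" "coalgebra C Ko Ka \<mu> \<nu> (X', c')"
    and "t \<in> Ar C" "Dom C t = X" "Cod C t = X'" "Cmp C c' t = Cmp C (Ka t) c"
  using assms unfolding coalg_cat_def by auto

lemma coalg_cat_simps:
  "Xc \<in> Ob (coalg_cat C Ko Ka \<mu> \<nu>) \<longleftrightarrow> coalgebra C Ko Ka \<mu> \<nu> Xc"
  "Dom (coalg_cat C Ko Ka \<mu> \<nu>) = fst"
  "Cod (coalg_cat C Ko Ka \<mu> \<nu>) = (\<lambda>a. snd (snd a))"
  unfolding coalg_cat_def by simp_all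

locale comonad_on_doctrine =
  fixes C :: "('o,'m) cat"
    and PC :: "'o \<Rightarrow> 'p set" and le :: "'o \<Rightarrow> 'p \<Rightarrow> 'p \<Rightarrow> bool" and rx :: "'m \<Rightarrow> 'p \<Rightarrow> 'p"
    and Ko :: "'o \<Rightarrow> 'o" and Ka :: "'m \<Rightarrow> 'm" and \<kappa> :: "'o \<Rightarrow> 'p \<Rightarrow> 'p"
    and \<mu> :: "'o \<Rightarrow> 'm" and \<nu> :: "'o \<Rightarrow> 'm"
  assumes doctrine: "doctrine C PC le rx"
    and doctrine_comonad: "doctrine_comonad C PC le rx Ko Ka \<kappa> \<mu> \<nu>"
begin

lemma comonad: "comonad C Ko Ka \<mu> \<nu>"
  using doctrine_comonad unfolding doctrine_comonad_def by blast

lemma kappa_closed: "X \<in> Ob C \<Longrightarrow> a \<in> PC X \<Longrightarrow> \<kappa> X a \<in> PC (Ko X)"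
  using doctrine_comonad unfolding doctrine_comonad_def by blast

lemma kappa_mono:
  "X \<in> Ob C \<Longrightarrow> a \<in> PC X \<Longrightarrow> b \<in> PC X \<Longrightarrow> le X a b \<Longrightarrow> le (Ko X) (\<kappa> X a) (\<kappa> X b)"
  using doctrine_comonad unfolding doctrine_comonad_def by blast

lemma kappa_natural:
  "t \<in> Ar C \<Longrightarrow> a \<in> PC (Cod C t) \<Longrightarrow> \<kappa> (Dom C t) (rx t a) = rx (Ka t) (\<kappa> (Cod C t) a)"
  using doctrine_comonad unfolding doctrine_comonad_def by blast

lemma kappa_le_comult:
  "X \<in> Ob C \<Longrightarrow> a \<in> PC X \<Longrightarrow> le (Ko X) (\<kappa> X a) (rx (\<mu> X) (\<kappa> (Ko X) (\<kappa> X a)))"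
  using doctrine_comonad unfolding doctrine_comonad_def by blast

lemma kappa_le_counit: "X \<in> Ob C \<Longrightarrow> a \<in> PC X \<Longrightarrow> le (Ko X) (\<kappa> X a) (rx (\<nu> X) a)"
  using doctrine_comonad unfolding doctrine_comonad_def by blast

context
  fixes X c
  assumes coalg: "coalgebra C Ko Ka \<mu> \<nu> (X, c)"
begin

lemma coalg_interior_closed: "a \<in> PC X \<Longrightarrow> rx c (\<kappa> X a) \<in> PC X"
  using doctrine_reindex_closed[OF doctrine] kappa_closed coalgebraD[OF coalg] by metis

lemma coalg_interior_mono:
  assumes "a \<in> PC X" "b \<in> PC X" "le X a b"
  shows "le X (rx c (\<kappa> X a)) (rx c (\<kappa> X b))"
  using doctrine_reindex_mono[OF doctrine, of c] kappa_closed kappa_mono assms coalgebraD[OF coalg]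
  by metis

lemma coalg_interior_deflationary:
  assumes a: "a \<in> PC X"
  shows "le X (rx c (\<kappa> X a)) a"
proof -
  note X = coalgebraD[OF coalg] and \<nu> = comonad_counit_arrow[OF comonad coalgebraD(1)[OF coalg]]
  have "le X (rx c (\<kappa> X a)) (rx c (rx (\<nu> X) a))"
    using doctrine_reindex_mono[OF doctrine, of c] doctrine_reindex_closed[OF doctrine, of "\<nu> X"]
      kappa_closed kappa_le_counit X \<nu> a by metis
  also have "rx c (rx (\<nu> X) a) = rx (Cmp C (\<nu> X) c) a"
    using doctrine_reindex_comp[OF doctrine, of c "\<nu> X"] X \<nu> a by simp
  also have "\<dots> = a"
    using doctrine_reindex_id[OF doctrine] X a by simp
  finally show ?thesis .
qed

lemma coalg_interior_le_iterated:
  assumes a: "a \<in> PC X"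
  shows "le X (rx c (\<kappa> X a)) (rx c (\<kappa> X (rx c (\<kappa> X a))))"
proof -
  note X = coalgebraD[OF coalg]
    and \<mu> = comonad_comult_arrow[OF comonad coalgebraD(1)[OF coalg]]
    and Kc = comonad_map_arrow[OF comonad coalgebraD(2)[OF coalg]]
  let ?b = "\<kappa> (Ko X) (\<kappa> X a)"
  have b: "?b \<in> PC (Ko (Ko X))"
    using kappa_closed comonad_obj_closed[OF comonad] X a by metis
  have "le X (rx c (\<kappa> X a)) (rx c (rx (\<mu> X) ?b))"
    using doctrine_reindex_mono[OF doctrine, of c] doctrine_reindex_closed[OF doctrine, of "\<mu> X"]
      kappa_closed kappa_le_comult X \<mu> a b by metis
  also have "rx c (rx (\<mu> X) ?b) = rx (Cmp C (\<mu> X) c) ?b"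
    using doctrine_reindex_comp[OF doctrine, of c "\<mu> X"] X \<mu> b by simp
  also have "\<dots> = rx (Cmp C (Ka c) c) ?b"
    using X by simp
  also have "\<dots> = rx c (rx (Ka c) ?b)"
    using doctrine_reindex_comp[OF doctrine, of c "Ka c"] X Kc b by simp
  also have "rx (Ka c) ?b = \<kappa> X (rx c (\<kappa> X a))"
    using kappa_natural[of c "\<kappa> X a"] kappa_closed X a by simp
  finally show ?thesis .
qed

end

lemma coalg_interior_natural:
  assumes t: "((X, c), t, (X', c')) \<in> Ar (coalg_cat C Ko Ka \<mu> \<nu>)" and a: "a \<in> PC X'"
  shows "rx c (\<kappa> X (rx t a)) = rx t (rx c' (\<kappa> X' a))"
proof -
  note T = coalg_cat_arrowD[OF t]
  note X = coalgebraD[OF T(1)] and X' = coalgebraD[OF T(2)]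
  have ka: "\<kappa> X' a \<in> PC (Ko X')"
    using kappa_closed X' a by blast
  have "rx c (\<kappa> X (rx t a)) = rx c (rx (Ka t) (\<kappa> X' a))"
    using kappa_natural[of t a] T a by simp
  also have "\<dots> = rx (Cmp C (Ka t) c) (\<kappa> X' a)"
    using doctrine_reindex_comp[OF doctrine, of c "Ka t"] comonad_map_arrow[OF comonad T(3)] X T ka
    by simp
  also have "\<dots> = rx (Cmp C c' t) (\<kappa> X' a)"
    using T by simp
  also have "\<dots> = rx t (rx c' (\<kappa> X' a))"
    using doctrine_reindex_comp[OF doctrine, of t c'] X' T ka by simp
  finally show ?thesis .
qed

end

theorem proposition6p6:
  fixes C :: "('o,'m) cat"
    and PC :: "'o \<Rightarrow> 'p set" and le :: "'o \<Rightarrow> 'p \<Rightarrow> 'p \<Rightarrow> bool" and rx :: "'m \<Rightarrow> 'p \<Rightarrow> 'p"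
    and Ko :: "'o \<Rightarrow> 'o" and Ka :: "'m \<Rightarrow> 'm" and \<kappa> :: "'o \<Rightarrow> 'p \<Rightarrow> 'p"
    and \<mu> :: "'o \<Rightarrow> 'm" and \<nu> :: "'o \<Rightarrow> 'm"
  assumes "category C"
    and "doctrine C PC le rx"
    and "doctrine_comonad C PC le rx Ko Ka \<kappa> \<mu> \<nu>"
  shows "interior_operator (coalg_cat C Ko Ka \<mu> \<nu>)
           (\<lambda>Xc. PC (U_ob Xc)) (\<lambda>Xc. le (U_ob Xc)) (\<lambda>a. rx (U_ar a))
           (\<lambda>Xc. rx (snd Xc) \<circ> \<kappa> (fst Xc))"
proof -
  interpret comonad_on_doctrine C PC le rx Ko Ka \<kappa> \<mu> \<nu>
    using assms(2,3) by unfold_locales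
  show ?thesis
    unfolding interior_operator_def Ball_def split_paired_All U_ob_def U_ar_def
    by (simp add: coalg_cat_simps coalg_interior_closed coalg_interior_mono
        coalg_interior_deflationary coalg_interior_le_iterated coalg_interior_natural)
qed

end
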